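(* Let $G$ be a complete bipartite graph (with both parts nonempty). Then $c(G) = \min\{2, \delta(G)\}$, $c_{V,\mathrm{r}}(G) = \delta(G)$, and $c_V(G) = c_{E,\mathrm{r}}(G) = c_E(G) = \Delta(G)$.
   Context: $\delta(G)$ and $\Delta(G)$ denote minimum and maximum degree. In all games the players alternate turns, cops first; initially the cop player places all cops, then the robber player places the robber on a vertex (several pieces may share a position). In a turn each piece of the moving player may stay or make one move (no obligation to move). The robber always sits on vertices and moves to an adjacent vertex; $v_r$ denotes his current vertex. Classical version: cops on vertices moving to adjacent vertices; cops win if a cop is on $v_r$; $c(G)$ is the least number of cops that can force a win in finitely many turns. Vertex version: cops on vertices; cops win when every neighbor of $v_r$ is occupied by a cop; number $c_V(G)$. Edge version: cops sit on edges; a cop on edge $e$ may move to any edge sharing an endpoint with $e$; cops win when every edge incident to $v_r$ is occupied; number $c_E(G)$. Restrictive vertex version: as the vertex version, but after each robber turn (including his initial placement) no cop may be on $v_r$; in particular the robber may not move onto a cop-occupied vertex, and if a cop moves onto $v_r$ the robber must leave in his next turn; number $c_{V,\mathrm{r}}(G)$. Restrictive edge version: as the edge version, but the robber may not move along an edge currently occupied by a cop; number $c_{E,\mathrm{r}}(G)$. *)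

theory Defs
  imports Main
begin

text \<open>Graphs: a vertex set V with a symmetric irreflexive adjacency relation E.\<close>

definition neighbors :: "'a set \<Rightarrow> ('a \<Rightarrow> 'a \<Rightarrow> bool) \<Rightarrow> 'a \<Rightarrow> 'a set" where
  "neighbors V E v = {u \<in> V. E v u}"

definition min_degree :: "'a set \<Rightarrow> ('a \<Rightarrow> 'a \<Rightarrow> bool) \<Rightarrow> nat" where
  "min_degree V E = Min ((\<lambda>v. card (neighbors V E v)) ` V)"

definition max_degree :: "'a set \<Rightarrow> ('a \<Rightarrow> 'a \<Rightarrow> bool) \<Rightarrow> nat" where
  "max_degree V E = Max ((\<lambda>v. card (neighbors V E v)) ` V)"

definition graph_edges :: "'a set \<Rightarrow> ('a \<Rightarrow> 'a \<Rightarrow> bool) \<Rightarrow> 'a set set" where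
  "graph_edges V E = {{u, v} | u v. u \<in> V \<and> v \<in> V \<and> E u v}"

definition complete_bipartite ::
  "'a set \<Rightarrow> ('a \<Rightarrow> 'a \<Rightarrow> bool) \<Rightarrow> 'a set \<Rightarrow> 'a set \<Rightarrow> bool" where
  "complete_bipartite V E X Y \<longleftrightarrow> X \<noteq> {} \<and> Y \<noteq> {} \<and> X \<inter> Y = {} \<and> V = X \<union> Y \<and>
     (\<forall>u v. E u v \<longleftrightarrow> (u \<in> X \<and> v \<in> Y) \<or> (u \<in> Y \<and> v \<in> X))"

text \<open>Positions: list of cop positions (type 'c),
  robber vertex, and a flag telling whether the cops are to move.
  cm p q: a single cop may move from p to q (staying is always allowed);
  rm cs r r': robber at r may go to r' (staying must be included by rm if allowed);
  cap cs r: capture condition.  cwin is the set of positions from which the cops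
  can force a capture in finitely many turns (cops' attractor).\<close>

inductive cwin :: "('c \<Rightarrow> 'c \<Rightarrow> bool) \<Rightarrow> ('c list \<Rightarrow> 'a \<Rightarrow> 'a \<Rightarrow> bool) \<Rightarrow>
    ('c list \<Rightarrow> 'a \<Rightarrow> bool) \<Rightarrow> 'c list \<Rightarrow> 'a \<Rightarrow> bool \<Rightarrow> bool"
  for cm rm cap where
  captured: "cap cs r \<Longrightarrow> cwin cm rm cap cs r t"
| cop_turn: "list_all2 (\<lambda>p q. p = q \<or> cm p q) cs cs' \<Longrightarrow> cwin cm rm cap cs' r False
      \<Longrightarrow> cwin cm rm cap cs r True"
| robber_turn: "(\<And>r'. rm cs r r' \<Longrightarrow> cwin cm rm cap cs r' True) \<Longrightarrow> cwin cm rm cap cs r False"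

definition cops_win :: "'a set \<Rightarrow> 'c set \<Rightarrow> ('c \<Rightarrow> 'c \<Rightarrow> bool) \<Rightarrow>
    ('c list \<Rightarrow> 'a \<Rightarrow> 'a \<Rightarrow> bool) \<Rightarrow> ('c list \<Rightarrow> 'a \<Rightarrow> bool) \<Rightarrow>
    ('c list \<Rightarrow> 'a \<Rightarrow> bool) \<Rightarrow> nat \<Rightarrow> bool" where
  "cops_win V P cm rm cap ok k \<longleftrightarrow>
     (\<exists>cs. length cs = k \<and> set cs \<subseteq> P \<and>
        (\<forall>r \<in> V. ok cs r \<longrightarrow> cwin cm rm cap cs r True))"

definition edge_move :: "'a set \<Rightarrow> ('a \<Rightarrow> 'a \<Rightarrow> bool) \<Rightarrow> 'a set \<Rightarrow> 'a set \<Rightarrow> bool" where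
  "edge_move V E e e' \<longleftrightarrow> e' \<in> graph_edges V E \<and> e \<inter> e' \<noteq> {}"

definition cop_number :: "'a set \<Rightarrow> ('a \<Rightarrow> 'a \<Rightarrow> bool) \<Rightarrow> nat" where
  "cop_number V E = (LEAST k. cops_win V V (\<lambda>p q. q \<in> V \<and> E p q)
      (\<lambda>cs r r'. r' = r \<or> (r' \<in> V \<and> E r r'))
      (\<lambda>cs r. r \<in> set cs) (\<lambda>cs r. True) k)"

definition cop_number_V :: "'a set \<Rightarrow> ('a \<Rightarrow> 'a \<Rightarrow> bool) \<Rightarrow> nat" where
  "cop_number_V V E = (LEAST k. cops_win V V (\<lambda>p q. q \<in> V \<and> E p q)
      (\<lambda>cs r r'. r' = r \<or> (r' \<in> V \<and> E r r'))
      (\<lambda>cs r. neighbors V E r \<subseteq> set cs) (\<lambda>cs r. True) k)"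

definition cop_number_E :: "'a set \<Rightarrow> ('a \<Rightarrow> 'a \<Rightarrow> bool) \<Rightarrow> nat" where
  "cop_number_E V E = (LEAST k. cops_win V (graph_edges V E) (edge_move V E)
      (\<lambda>cs r r'. r' = r \<or> (r' \<in> V \<and> E r r'))
      (\<lambda>cs r. \<forall>u \<in> neighbors V E r. {r, u} \<in> set cs) (\<lambda>cs r. True) k)"

definition cop_number_Vr :: "'a set \<Rightarrow> ('a \<Rightarrow> 'a \<Rightarrow> bool) \<Rightarrow> nat" where
  "cop_number_Vr V E = (LEAST k. cops_win V V (\<lambda>p q. q \<in> V \<and> E p q)
      (\<lambda>cs r r'. (r' = r \<or> (r' \<in> V \<and> E r r')) \<and> r' \<notin> set cs)
      (\<lambda>cs r. neighbors V E r \<subseteq> set cs) (\<lambda>cs r. r \<notin> set cs) k)"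

definition cop_number_Er :: "'a set \<Rightarrow> ('a \<Rightarrow> 'a \<Rightarrow> bool) \<Rightarrow> nat" where
  "cop_number_Er V E = (LEAST k. cops_win V (graph_edges V E) (edge_move V E)
      (\<lambda>cs r r'. r' = r \<or> (r' \<in> V \<and> E r r' \<and> {r, r'} \<notin> set cs))
      (\<lambda>cs r. \<forall>u \<in> neighbors V E r. {r, u} \<in> set cs) (\<lambda>cs r. True) k)"

end

theory Submission
  imports Defs
begin

text \<open>Let \<open>X\<close> be the smaller side. Every upper bound is realised by a position from which
  the cops capture the robber within one move: one cop on each side (or one cop on \<open>X\<close>
  when \<open>|X| = 1\<close>) in the classical game; all of \<open>X\<close> occupied in the restrictive vertex
  game, where the robber must then start in \<open>Y\<close>; and, in the vertex and edge games, one
  piece for every vertex of \<open>Y\<close>, which can be moved onto all neighbours (incident edges) of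
  the robber because \<open>Y\<close> maps onto \<open>X\<close>. For the lower bounds, a robber sitting still at a
  vertex of \<open>Y\<close> cannot have his \<open>|Y|\<close> neighbours or incident edges covered by fewer
  pieces; in the restrictive vertex game fewer than \<open>\<delta>\<close> cops always leave him a free
  neighbour to flee to; and a single cop is evaded when \<open>|X| \<ge> 2\<close>.\<close>

lemma Least_nat_eqI:
  fixes n :: nat
  assumes "P n" and "\<And>k. k < n \<Longrightarrow> \<not> P k"
  shows "(LEAST k. P k) = n"
  using assms by (metis Least_equality not_le)

lemma robber_invariant_not_cwin:
  assumes "cwin cm rm cap cs r t" and "Inv cs r t"
    and "\<And>cs r t. Inv cs r t \<Longrightarrow> \<not> cap cs r"
    and "\<And>cs cs' r. Inv cs r True \<Longrightarrow> list_all2 (\<lambda>p q. p = q \<or> cm p q) cs cs'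
           \<Longrightarrow> Inv cs' r False"
    and "\<And>cs r. Inv cs r False \<Longrightarrow> \<exists>r'. rm cs r r' \<and> Inv cs r' True"
  shows False
  using assms(1,2) by (induction rule: cwin.induct) (use assms(3-5) in blast)+

lemma not_cops_win_by_robber_invariant:
  assumes "\<And>cs. length cs = k \<Longrightarrow> set cs \<subseteq> P \<Longrightarrow> \<exists>r\<in>V. ok cs r \<and> Inv cs r True"
    and "\<And>cs r t. Inv cs r t \<Longrightarrow> \<not> cap cs r"
    and "\<And>cs cs' r. Inv cs r True \<Longrightarrow> list_all2 (\<lambda>p q. p = q \<or> cm p q) cs cs'
           \<Longrightarrow> Inv cs' r False"
    and "\<And>cs r. Inv cs r False \<Longrightarrow> \<exists>r'. rm cs r r' \<and> Inv cs r' True"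
  shows "\<not> cops_win V P cm rm cap ok k"
proof
  assume "cops_win V P cm rm cap ok k"
  then obtain cs where cs: "length cs = k" "set cs \<subseteq> P"
    and wins: "\<forall>r \<in> V. ok cs r \<longrightarrow> cwin cm rm cap cs r True"
    unfolding cops_win_def by blast
  from assms(1)[OF cs] obtain r where "r \<in> V" "ok cs r" "Inv cs r True" by blast
  with wins have "cwin cm rm cap cs r True" by blast
  from robber_invariant_not_cwin[OF this \<open>Inv cs r True\<close> assms(2-4)] show False .
qed

lemma not_cops_win_stationary_robber:
  assumes "v \<in> V" and "\<And>cs. ok cs v" and "\<And>cs. rm cs v v"
    and "\<And>cs. length cs = k \<Longrightarrow> \<not> cap cs v"
  shows "\<not> cops_win V P cm rm cap ok k"
  by (rule not_cops_win_by_robber_invariant[where Inv = "\<lambda>cs r t. r = v \<and> length cs = k"])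
    (use assms in \<open>auto dest: list_all2_lengthD\<close>)

lemma cops_win_in_one_move:
  assumes "length cs = k" and "set cs \<subseteq> P"
    and "\<And>r. r \<in> V \<Longrightarrow> ok cs r \<Longrightarrow>
           \<exists>cs'. list_all2 (\<lambda>p q. p = q \<or> cm p q) cs cs' \<and> cap cs' r"
  shows "cops_win V P cm rm cap ok k"
  unfolding cops_win_def using assms by (blast intro: cwin.cop_turn cwin.captured)

lemma not_cops_win_vertex_capture_below_degree:
  assumes "v \<in> V" and "k < card (neighbors V E v)" and "\<And>cs. rm cs v v"
  shows "\<not> cops_win V P cm rm (\<lambda>cs r. neighbors V E r \<subseteq> set cs) (\<lambda>cs r. True) k"
proof (rule not_cops_win_stationary_robber[where v = v])
  fix cs :: "'a list"
  assume "length cs = k"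
  then show "\<not> neighbors V E v \<subseteq> set cs"
    using assms(2) card_mono[of "set cs" "neighbors V E v"] card_length[of cs] by auto
qed (use assms in simp_all)

lemma not_cops_win_edge_capture_below_degree:
  assumes "v \<in> V" and "k < card (neighbors V E v)" and "\<And>cs. rm cs v v"
  shows "\<not> cops_win V P cm rm (\<lambda>cs r. \<forall>u \<in> neighbors V E r. {r, u} \<in> set cs)
      (\<lambda>cs r. True) k"
proof (rule not_cops_win_stationary_robber[where v = v])
  fix cs :: "'a set list"
  assume "length cs = k"
  show "\<not> (\<forall>u \<in> neighbors V E v. {v, u} \<in> set cs)"
  proof
    assume "\<forall>u \<in> neighbors V E v. {v, u} \<in> set cs"
    then have "(\<lambda>u. {v, u}) ` neighbors V E v \<subseteq> set cs" by blast
    moreover have "inj_on (\<lambda>u. {v, u}) (neighbors V E v)"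
      by (auto simp: inj_on_def doubleton_eq_iff)
    ultimately have "card (neighbors V E v) \<le> card (set cs)"
      by (metis card_image card_mono finite_set)
    with card_length[of cs] \<open>length cs = k\<close> assms(2) show False by simp
  qed
qed (use assms in simp_all)

lemma not_cops_win_restrictive_vertex_below_min_degree:
  assumes "V \<noteq> {}" and "\<And>v. v \<in> V \<Longrightarrow> k < card (neighbors V E v)"
  shows "\<not> cops_win V P cm (\<lambda>cs r r'. (r' = r \<or> (r' \<in> V \<and> E r r')) \<and> r' \<notin> set cs)
      (\<lambda>cs r. neighbors V E r \<subseteq> set cs) (\<lambda>cs r. r \<notin> set cs) k"
proof -
  have free_neighbor: "\<exists>u \<in> neighbors V E v. u \<notin> set cs"
    if "v \<in> V" "length cs = k" for v and cs :: "'a list"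
    using assms(2)[OF \<open>v \<in> V\<close>] card_mono[of "set cs" "neighbors V E v"] card_length[of cs]
      \<open>length cs = k\<close> by auto
  obtain v where "v \<in> V" using assms(1) by blast
  show ?thesis
  proof (rule not_cops_win_by_robber_invariant[where
        Inv = "\<lambda>cs r t. length cs = k \<and> r \<in> V \<and> (t \<longrightarrow> r \<notin> set cs)"])
    fix cs :: "'a list"
    assume "length cs = k"
    with free_neighbor[OF \<open>v \<in> V\<close>] show "\<exists>r\<in>V. r \<notin> set cs \<and>
        length cs = k \<and> r \<in> V \<and> (True \<longrightarrow> r \<notin> set cs)"
      unfolding neighbors_def by auto
  next
    fix cs :: "'a list" and r t
    assume "length cs = k \<and> r \<in> V \<and> (t \<longrightarrow> r \<notin> set cs)"
    then show "\<not> neighbors V E r \<subseteq> set cs" using free_neighbor by blast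
  next
    fix cs :: "'a list" and r
    assume "length cs = k \<and> r \<in> V \<and> (False \<longrightarrow> r \<notin> set cs)"
    then show "\<exists>r'. ((r' = r \<or> r' \<in> V \<and> E r r') \<and> r' \<notin> set cs) \<and>
        length cs = k \<and> r' \<in> V \<and> (True \<longrightarrow> r' \<notin> set cs)"
      using free_neighbor unfolding neighbors_def by blast
  qed (auto dest: list_all2_lengthD)
qed

lemma cops_win_classical_if_dominating:
  assumes "set cs \<subseteq> V" and "\<And>r. r \<in> V \<Longrightarrow> r \<in> set cs \<or> (\<exists>c \<in> set cs. E c r)"
  shows "cops_win V V (\<lambda>p q. q \<in> V \<and> E p q) rm (\<lambda>cs r. r \<in> set cs) ok (length cs)"
proof (rule cops_win_in_one_move[OF refl assms(1)])
  fix r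
  assume "r \<in> V"
  with assms(2) consider "r \<in> set cs" | c where "c \<in> set cs" "E c r" by blast
  then show "\<exists>cs'. list_all2 (\<lambda>p q. p = q \<or> q \<in> V \<and> E p q) cs cs' \<and> r \<in> set cs'"
  proof cases
    case 1
    then show ?thesis by (auto intro: list_all2_refl)
  next
    case 2
    let ?cs' = "map (\<lambda>p. if p = c then r else p) cs"
    have "list_all2 (\<lambda>p q. p = q \<or> q \<in> V \<and> E p q) cs ?cs'"
      using 2 \<open>r \<in> V\<close> by (auto simp: list_all2_map2 intro: list_all2_refl)
    moreover have "r \<in> set ?cs'" using 2 by force
    ultimately show ?thesis by blast
  qed
qed

lemma ex_surj_on_if_card_le:
  assumes "finite A" and "finite B" and "B \<noteq> {}" and "card B \<le> card A"
  shows "\<exists>f. f ` A = B"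
proof -
  obtain h where h: "h ` B \<subseteq> A" "inj_on h B" using card_le_inj[OF assms(2,1,4)] by blast
  obtain b where "b \<in> B" using assms(3) by blast
  define f where "f a = (if a \<in> h ` B then inv_into B h a else b)" for a
  have "f ` A \<subseteq> B" unfolding f_def using \<open>b \<in> B\<close> by (auto intro: inv_into_into)
  moreover have "B \<subseteq> f ` A"
  proof
    fix x
    assume "x \<in> B"
    then have "f (h x) = x" unfolding f_def using h(2) by auto
    with \<open>x \<in> B\<close> h(1) show "x \<in> f ` A" by (metis image_eqI image_subset_iff)
  qed
  ultimately show ?thesis by blast
qed

lemma finite_ex_list_length_card:
  "finite A \<Longrightarrow> \<exists>xs. set xs = A \<and> length xs = card A"
  using finite_distinct_list distinct_card by metis

lemma complete_bipartite_swap: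
  "complete_bipartite V E X Y \<Longrightarrow> complete_bipartite V E Y X"
  unfolding complete_bipartite_def by blast

lemma neighbors_complete_bipartite:
  assumes "complete_bipartite V E X Y"
  shows "x \<in> X \<Longrightarrow> neighbors V E x = Y"
  using assms unfolding complete_bipartite_def neighbors_def by auto

lemma degrees_complete_bipartite:
  assumes "complete_bipartite V E X Y"
  shows "(\<lambda>v. card (neighbors V E v)) ` V = {card X, card Y}"
proof -
  have X: "neighbors V E x = Y" if "x \<in> X" for x
    using neighbors_complete_bipartite[OF assms that] .
  have Y: "neighbors V E y = X" if "y \<in> Y" for y
    using neighbors_complete_bipartite[OF complete_bipartite_swap[OF assms] that] .
  from assms have "V = X \<union> Y" "X \<noteq> {}" "Y \<noteq> {}" unfolding complete_bipartite_def by auto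
  then show ?thesis using X Y by (auto simp: image_Un)
qed

lemma min_degree_complete_bipartite:
  "complete_bipartite V E X Y \<Longrightarrow> min_degree V E = min (card X) (card Y)"
  unfolding min_degree_def by (simp add: degrees_complete_bipartite)

lemma max_degree_complete_bipartite:
  "complete_bipartite V E X Y \<Longrightarrow> max_degree V E = max (card X) (card Y)"
  unfolding max_degree_def by (simp add: degrees_complete_bipartite)

locale complete_bipartite_sorted =
  fixes V :: "'a set" and E :: "'a \<Rightarrow> 'a \<Rightarrow> bool" and X Y :: "'a set"
  assumes finite_V: "finite V"
    and complete_bipartite: "complete_bipartite V E X Y"
    and card_le: "card X \<le> card Y"
begin

lemma parts: "X \<noteq> {}" "Y \<noteq> {}" "X \<inter> Y = {}" "V = X \<union> Y"
  and adjacent_iff: "E u v \<longleftrightarrow> (u \<in> X \<and> v \<in> Y) \<or> (u \<in> Y \<and> v \<in> X)"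
  using complete_bipartite unfolding complete_bipartite_def by auto

lemma finite_parts: "finite X" "finite Y"
  using finite_V parts(4) by auto

lemma neighbors_left: "x \<in> X \<Longrightarrow> neighbors V E x = Y"
  by (rule neighbors_complete_bipartite[OF complete_bipartite])

lemma neighbors_right: "y \<in> Y \<Longrightarrow> neighbors V E y = X"
  by (rule neighbors_complete_bipartite[OF complete_bipartite_swap[OF complete_bipartite]])

lemma card_left_le_degree: "v \<in> V \<Longrightarrow> card X \<le> card (neighbors V E v)"
  using neighbors_left neighbors_right card_le parts(4) by auto

lemma ex_surj_right_left: "\<exists>f. f ` Y = X"
  using ex_surj_on_if_card_le[OF finite_parts(2,1) parts(1) card_le] .

lemma ex_non_neighbor:
  assumes "2 \<le> card X" and "c \<in> V"
  shows "\<exists>r \<in> V. r \<noteq> c \<and> \<not> E r c"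
proof -
  have other_in: "\<exists>r \<in> A. r \<noteq> c" if "finite A" "2 \<le> card A" for A
    using that card_mono[of "{c}" A] by fastforce
  from assms(2) parts(4) consider "c \<in> X" | "c \<in> Y" by blast
  then show ?thesis
  proof cases
    case 1
    with other_in[OF finite_parts(1) assms(1)] parts adjacent_iff show ?thesis by blast
  next
    case 2
    moreover obtain r where "r \<in> Y" "r \<noteq> c"
      using other_in[OF finite_parts(2)] assms(1) card_le by (meson order_trans)
    ultimately show ?thesis using parts adjacent_iff by blast
  qed
qed

text \<open>The robber stays on the side of the cop but never next to it.\<close>

lemma one_cop_loses:
  assumes "2 \<le> card X"
  shows "\<not> cops_win V V (\<lambda>p q. q \<in> V \<and> E p q) (\<lambda>cs r r'. r' = r \<or> (r' \<in> V \<and> E r r'))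
      (\<lambda>cs r. r \<in> set cs) (\<lambda>cs r. True) 1"
proof (rule not_cops_win_by_robber_invariant[where
      Inv = "\<lambda>cs r t. \<exists>c. cs = [c] \<and> c \<in> V \<and> r \<in> V \<and> r \<noteq> c \<and> (t \<longrightarrow> \<not> E r c)"])
  fix cs :: "'a list"
  assume "length cs = 1" "set cs \<subseteq> V"
  then obtain c where "cs = [c]" "c \<in> V" by (cases cs) auto
  with ex_non_neighbor[OF assms \<open>c \<in> V\<close>] show "\<exists>r\<in>V. True \<and>
      (\<exists>c. cs = [c] \<and> c \<in> V \<and> r \<in> V \<and> r \<noteq> c \<and> (True \<longrightarrow> \<not> E r c))" by blast
next
  fix cs cs' :: "'a list" and r
  assume "\<exists>c. cs = [c] \<and> c \<in> V \<and> r \<in> V \<and> r \<noteq> c \<and> (True \<longrightarrow> \<not> E r c)"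
    and "list_all2 (\<lambda>p q. p = q \<or> q \<in> V \<and> E p q) cs cs'"
  then show "\<exists>c. cs' = [c] \<and> c \<in> V \<and> r \<in> V \<and> r \<noteq> c \<and> (False \<longrightarrow> \<not> E r c)"
    using adjacent_iff by (auto simp: list_all2_Cons1)
next
  fix cs :: "'a list" and r
  assume "\<exists>c. cs = [c] \<and> c \<in> V \<and> r \<in> V \<and> r \<noteq> c \<and> (False \<longrightarrow> \<not> E r c)"
  then obtain c where c: "cs = [c]" "c \<in> V" "r \<in> V" "r \<noteq> c" by blast
  show "\<exists>r'. (r' = r \<or> r' \<in> V \<and> E r r') \<and>
      (\<exists>c. cs = [c] \<and> c \<in> V \<and> r' \<in> V \<and> r' \<noteq> c \<and> (True \<longrightarrow> \<not> E r' c))"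
  proof (cases "E r c")
    case False
    with c show ?thesis by blast
  next
    case True
    obtain r' where "r' \<in> V" "r' \<noteq> c" "\<not> E r' c"
      using ex_non_neighbor[OF assms c(2)] by blast
    moreover from this True c parts(3,4) have "E r r'" unfolding adjacent_iff by blast
    ultimately show ?thesis using c by blast
  qed
qed force

lemma cop_number_eq: "cop_number V E = min 2 (card X)"
  unfolding cop_number_def
proof (rule Least_nat_eqI)
  obtain x y where xy: "x \<in> X" "y \<in> Y" using parts by blast
  show "cops_win V V (\<lambda>p q. q \<in> V \<and> E p q) (\<lambda>cs r r'. r' = r \<or> (r' \<in> V \<and> E r r'))
      (\<lambda>cs r. r \<in> set cs) (\<lambda>cs r. True) (min 2 (card X))"
  proof (cases "card X = 1")
    case True
    then have "X = {x}" using xy(1) by (auto simp: card_1_singleton_iff)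
    then have "cops_win V V (\<lambda>p q. q \<in> V \<and> E p q) (\<lambda>cs r r'. r' = r \<or> (r' \<in> V \<and> E r r'))
        (\<lambda>cs r. r \<in> set cs) (\<lambda>cs r. True) (length [x])"
      by (intro cops_win_classical_if_dominating) (use xy parts adjacent_iff in auto)
    with True show ?thesis by simp
  next
    case False
    have "cops_win V V (\<lambda>p q. q \<in> V \<and> E p q) (\<lambda>cs r r'. r' = r \<or> (r' \<in> V \<and> E r r'))
        (\<lambda>cs r. r \<in> set cs) (\<lambda>cs r. True) (length [x, y])"
      by (intro cops_win_classical_if_dominating) (use xy parts adjacent_iff in auto)
    moreover from False finite_parts(1) parts(1) have "min 2 (card X) = length [x, y]"
      using card_gt_0_iff[of X] by simp
    ultimately show ?thesis by simp
  qed
next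
  fix k
  assume "k < min 2 (card X)"
  then consider "k = 0" | "k = 1" "2 \<le> card X" by linarith
  then show "\<not> cops_win V V (\<lambda>p q. q \<in> V \<and> E p q) (\<lambda>cs r r'. r' = r \<or> (r' \<in> V \<and> E r r'))
      (\<lambda>cs r. r \<in> set cs) (\<lambda>cs r. True) k"
  proof cases
    case 1
    from parts obtain v where "v \<in> V" by blast
    with 1 show ?thesis by (intro not_cops_win_stationary_robber[where v = v]) auto
  next
    case 2
    with one_cop_loses show ?thesis by simp
  qed
qed

lemma cop_number_Vr_eq: "cop_number_Vr V E = card X"
  unfolding cop_number_Vr_def
proof (rule Least_nat_eqI)
  obtain xs where xs: "set xs = X" "length xs = card X"
    using finite_ex_list_length_card[OF finite_parts(1)] by blast
  show "cops_win V V (\<lambda>p q. q \<in> V \<and> E p q)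
      (\<lambda>cs r r'. (r' = r \<or> (r' \<in> V \<and> E r r')) \<and> r' \<notin> set cs)
      (\<lambda>cs r. neighbors V E r \<subseteq> set cs) (\<lambda>cs r. r \<notin> set cs) (card X)"
    by (rule cops_win_in_one_move[OF xs(2)])
      (use xs parts neighbors_right in \<open>auto intro: list_all2_refl\<close>)
next
  show "\<not> cops_win V V (\<lambda>p q. q \<in> V \<and> E p q)
      (\<lambda>cs r r'. (r' = r \<or> (r' \<in> V \<and> E r r')) \<and> r' \<notin> set cs)
      (\<lambda>cs r. neighbors V E r \<subseteq> set cs) (\<lambda>cs r. r \<notin> set cs) k" if "k < card X" for k
  proof (rule not_cops_win_restrictive_vertex_below_min_degree)
    show "V \<noteq> {}" using parts(1,4) by blast
    show "k < card (neighbors V E v)" if "v \<in> V" for v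
      using card_left_le_degree[OF that] \<open>k < card X\<close> by linarith
  qed
qed

lemma vertex_cops_win:
  "cops_win V V (\<lambda>p q. q \<in> V \<and> E p q) rm (\<lambda>cs r. neighbors V E r \<subseteq> set cs) ok (card Y)"
proof -
  obtain ys where ys: "set ys = Y" "length ys = card Y"
    using finite_ex_list_length_card[OF finite_parts(2)] by blast
  obtain f where f: "f ` Y = X" using ex_surj_right_left by blast
  show ?thesis
  proof (rule cops_win_in_one_move[OF ys(2)])
    show "set ys \<subseteq> V" using ys parts(4) by blast
  next
    fix r
    assume "r \<in> V"
    then consider "r \<in> X" | "r \<in> Y" using parts(4) by blast
    then show "\<exists>cs'. list_all2 (\<lambda>p q. p = q \<or> q \<in> V \<and> E p q) ys cs' \<and>
        neighbors V E r \<subseteq> set cs'"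
    proof cases
      case 1
      with neighbors_left ys show ?thesis by (auto intro: list_all2_refl)
    next
      case 2
      have "list_all2 (\<lambda>p q. p = q \<or> q \<in> V \<and> E p q) ys (map f ys)"
        unfolding list_all2_map2
        by (rule list.rel_refl_strong) (use ys f parts(4) adjacent_iff in auto)
      with neighbors_right[OF 2] ys f show ?thesis by auto
    qed
  qed
qed

lemma cop_number_V_eq: "cop_number_V V E = card Y"
  unfolding cop_number_V_def
proof (rule Least_nat_eqI, rule vertex_cops_win)
  fix k
  assume "k < card Y"
  obtain x where "x \<in> X" using parts(1) by blast
  with \<open>k < card Y\<close> show "\<not> cops_win V V (\<lambda>p q. q \<in> V \<and> E p q)
      (\<lambda>cs r r'. r' = r \<or> (r' \<in> V \<and> E r r'))
      (\<lambda>cs r. neighbors V E r \<subseteq> set cs) (\<lambda>cs r. True) k"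
    by (intro not_cops_win_vertex_capture_below_degree[where v = x])
      (use parts(4) neighbors_left in auto)
qed

lemma edge_left_right: "x \<in> X \<Longrightarrow> y \<in> Y \<Longrightarrow> {x, y} \<in> graph_edges V E"
  unfolding graph_edges_def using parts(4) adjacent_iff by blast

lemma edge_cops_win:
  "cops_win V (graph_edges V E) (edge_move V E) rm
     (\<lambda>cs r. \<forall>u \<in> neighbors V E r. {r, u} \<in> set cs) ok (card Y)"
proof -
  obtain ys where ys: "set ys = Y" "length ys = card Y"
    using finite_ex_list_length_card[OF finite_parts(2)] by blast
  obtain f where f: "f ` Y = X" using ex_surj_right_left by blast
  let ?cs = "map (\<lambda>y. {f y, y}) ys"
  show ?thesis
  proof (rule cops_win_in_one_move)
    show "length ?cs = card Y" using ys by simp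
    show "set ?cs \<subseteq> graph_edges V E" using ys f edge_left_right by auto
  next
    fix r
    assume "r \<in> V"
    then consider "r \<in> X" | "r \<in> Y" using parts(4) by blast
    then show "\<exists>cs'. list_all2 (\<lambda>p q. p = q \<or> edge_move V E p q) ?cs cs' \<and>
        (\<forall>u \<in> neighbors V E r. {r, u} \<in> set cs')"
    proof cases
      case 1
      have "list_all2 (\<lambda>p q. p = q \<or> edge_move V E p q) ?cs (map (\<lambda>y. {r, y}) ys)"
        unfolding list_all2_map1 list_all2_map2 edge_move_def
        by (rule list.rel_refl_strong) (use ys 1 edge_left_right in auto)
      moreover have "\<forall>u \<in> neighbors V E r. {r, u} \<in> set (map (\<lambda>y. {r, y}) ys)"
        using neighbors_left[OF 1] ys by auto
      ultimately show ?thesis by blast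
    next
      case 2
      have "list_all2 (\<lambda>p q. p = q \<or> edge_move V E p q) ?cs (map (\<lambda>y. {f y, r}) ys)"
        unfolding list_all2_map1 list_all2_map2 edge_move_def
        by (rule list.rel_refl_strong) (use ys 2 f edge_left_right in auto)
      moreover have "\<forall>u \<in> neighbors V E r. {r, u} \<in> set (map (\<lambda>y. {f y, r}) ys)"
        using neighbors_right[OF 2] ys f by (auto simp: insert_commute)
      ultimately show ?thesis by blast
    qed
  qed
qed

lemma cop_number_E_eq: "cop_number_E V E = card Y"
  unfolding cop_number_E_def
proof (rule Least_nat_eqI, rule edge_cops_win)
  fix k
  assume "k < card Y"
  obtain x where "x \<in> X" using parts(1) by blast
  with \<open>k < card Y\<close> show "\<not> cops_win V (graph_edges V E) (edge_move V E)
      (\<lambda>cs r r'. r' = r \<or> (r' \<in> V \<and> E r r'))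
      (\<lambda>cs r. \<forall>u \<in> neighbors V E r. {r, u} \<in> set cs) (\<lambda>cs r. True) k"
    by (intro not_cops_win_edge_capture_below_degree[where v = x])
      (use parts(4) neighbors_left in auto)
qed

lemma cop_number_Er_eq: "cop_number_Er V E = card Y"
  unfolding cop_number_Er_def
proof (rule Least_nat_eqI, rule edge_cops_win)
  fix k
  assume "k < card Y"
  obtain x where "x \<in> X" using parts(1) by blast
  with \<open>k < card Y\<close> show "\<not> cops_win V (graph_edges V E) (edge_move V E)
      (\<lambda>cs r r'. r' = r \<or> (r' \<in> V \<and> E r r' \<and> {r, r'} \<notin> set cs))
      (\<lambda>cs r. \<forall>u \<in> neighbors V E r. {r, u} \<in> set cs) (\<lambda>cs r. True) k"
    by (intro not_cops_win_edge_capture_below_degree[where v = x])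
      (use parts(4) neighbors_left in auto)
qed

end

theorem proposition1:
  fixes V X Y :: "'a set" and E :: "'a \<Rightarrow> 'a \<Rightarrow> bool"
  assumes "finite V"
    and "complete_bipartite V E X Y"
  shows "cop_number V E = min 2 (min_degree V E) \<and>
         cop_number_Vr V E = min_degree V E \<and>
         cop_number_V V E = max_degree V E \<and>
         cop_number_Er V E = max_degree V E \<and>
         cop_number_E V E = max_degree V E"
proof -
  obtain A B where AB: "complete_bipartite V E A B" "card A \<le> card B"
    using assms(2) complete_bipartite_swap nat_le_linear by blast
  then interpret complete_bipartite_sorted V E A B
    using assms(1) by unfold_locales
  have "min_degree V E = card A" "max_degree V E = card B"
    using min_degree_complete_bipartite[OF AB(1)] max_degree_complete_bipartite[OF AB(1)] AB(2)
    by simp_all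
  with cop_number_eq cop_number_Vr_eq cop_number_V_eq cop_number_Er_eq cop_number_E_eq
  show ?thesis by simp
qed

end
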